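(* Let $(R,\mathfrak{m})$ be a finite commutative local ring with identity and let $I$ be an ideal of $R$ with $I\subseteq\mathfrak m$ such that $\mathfrak{m}/I$ is not a principal ideal of $R/I$. If some minimal generating set of $\mathfrak{m}/I$ contains distinct elements $x+I$ and $y+I$ with $|U(R)x|\geq 3$ and $|U(R)y|\geq 3$, then $\Gamma''_I(R)$ is not planar.
   Context: $U(R)$ is the group of units of $R$ and $U(R)x=\{ux: u\in U(R)\}$. For an ideal $I$ of $R$, $\Gamma''_I(R)$ is the simple undirected graph whose vertex set is $\{x\in R\setminus I : xR+I\neq R\}$, with distinct vertices $x,y$ adjacent if and only if $x\notin yR+I$ and $y\notin xR+I$. A graph is planar if it can be drawn in the plane with edges meeting only at their endpoints. *)

theory Defs
  imports "HOL-Analysis.Analysis"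
begin

definition is_ideal :: "'a::comm_ring_1 set \<Rightarrow> bool" where
  "is_ideal I \<longleftrightarrow> 0 \<in> I \<and> (\<forall>x\<in>I. \<forall>y\<in>I. x + y \<in> I) \<and> (\<forall>r. \<forall>x\<in>I. r * x \<in> I)"

definition is_maximal_ideal :: "'a::comm_ring_1 set \<Rightarrow> bool" where
  "is_maximal_ideal M \<longleftrightarrow> is_ideal M \<and> M \<noteq> UNIV \<and>
     (\<forall>J. is_ideal J \<and> M \<subseteq> J \<longrightarrow> J = M \<or> J = UNIV)"

definition local_ring_with :: "'a::comm_ring_1 set \<Rightarrow> bool" where
  "local_ring_with M \<longleftrightarrow> is_maximal_ideal M \<and> (\<forall>J. is_maximal_ideal J \<longrightarrow> J = M)"

definition units :: "'a::comm_ring_1 set" where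
  "units = {u. u dvd 1}"

definition unit_orbit :: "'a::comm_ring_1 \<Rightarrow> 'a set" where
  "unit_orbit x = {u * x | u. u \<in> units}"

definition coset :: "'a::comm_ring_1 set \<Rightarrow> 'a \<Rightarrow> 'a set" where
  "coset I x = {x + i | i. i \<in> I}"

definition principal_plus :: "'a::comm_ring_1 set \<Rightarrow> 'a \<Rightarrow> 'a set" where
  "principal_plus I x = {x * r + i | r i. i \<in> I}"

text \<open>Preimage in R of the ideal of R/I generated by a (finite) set S of cosets of I.\<close>
definition quot_gen :: "'a::comm_ring_1 set \<Rightarrow> 'a set set \<Rightarrow> 'a set" where
  "quot_gen I S = {z. \<exists>r rep. (\<forall>C\<in>S. rep C \<in> C) \<and> z - (\<Sum>C\<in>S. r C * rep C) \<in> I}"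

text \<open>M/I is a principal ideal of R/I (M an ideal containing I).\<close>
definition quot_principal :: "'a::comm_ring_1 set \<Rightarrow> 'a set \<Rightarrow> bool" where
  "quot_principal I M \<longleftrightarrow> (\<exists>a. M = principal_plus I a)"

text \<open>S is a minimal generating set of M/I (a set of cosets of I, minimal w.r.t. inclusion).\<close>
definition min_gen_set :: "'a::comm_ring_1 set \<Rightarrow> 'a set \<Rightarrow> 'a set set \<Rightarrow> bool" where
  "min_gen_set I M S \<longleftrightarrow> S \<subseteq> range (coset I) \<and> quot_gen I S = M \<and>
     (\<forall>T. T \<subset> S \<longrightarrow> quot_gen I T \<noteq> M)"

definition gamma_vertices :: "'a::comm_ring_1 set \<Rightarrow> 'a set" where
  "gamma_vertices I = {x. x \<notin> I \<and> principal_plus I x \<noteq> UNIV}"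

definition gamma_adj :: "'a::comm_ring_1 set \<Rightarrow> 'a \<Rightarrow> 'a \<Rightarrow> bool" where
  "gamma_adj I x y \<longleftrightarrow> x \<in> gamma_vertices I \<and> y \<in> gamma_vertices I \<and> x \<noteq> y \<and>
     x \<notin> principal_plus I y \<and> y \<notin> principal_plus I x"

definition planar :: "'v set \<Rightarrow> ('v \<Rightarrow> 'v \<Rightarrow> bool) \<Rightarrow> bool" where
  "planar V E \<longleftrightarrow> (\<exists>(p :: 'v \<Rightarrow> complex) (\<gamma> :: 'v \<Rightarrow> 'v \<Rightarrow> real \<Rightarrow> complex).
     inj_on p V \<and>
     (\<forall>u\<in>V. \<forall>v\<in>V. E u v \<longrightarrow>
        arc (\<gamma> u v) \<and> pathstart (\<gamma> u v) = p u \<and> pathfinish (\<gamma> u v) = p v \<and>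
        path_image (\<gamma> u v) \<inter> p ` V \<subseteq> {p u, p v}) \<and>
     (\<forall>u\<in>V. \<forall>v\<in>V. \<forall>w\<in>V. \<forall>z\<in>V. E u v \<and> E w z \<and> {u, v} \<noteq> {w, z} \<longrightarrow>
        path_image (\<gamma> u v) \<inter> path_image (\<gamma> w z) \<subseteq> p ` ({u, v} \<inter> {w, z})))"

end

theory Submission
  imports Defs
begin

text \<open>Minimality of the generating set gives \<open>x \<notin> yR + I\<close> and \<open>y \<notin> xR + I\<close>, and both
  relations survive multiplying x and y by units. Hence every element of \<open>U(R)x\<close> is adjacent to
  every element of \<open>U(R)y\<close>, and \<open>\<Gamma>''_I(R)\<close> contains \<open>K\<^sub>3\<^sub>,\<^sub>3\<close>.

  To see that \<open>K\<^sub>3\<^sub>,\<^sub>3\<close> with parts \<open>{a\<^sub>1, a\<^sub>2, a\<^sub>3}\<close>, \<open>{b\<^sub>1, b\<^sub>2, b\<^sub>3}\<close> has no plane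
  drawing, join \<open>a\<^sub>1\<close> to \<open>a\<^sub>2\<close> through each \<open>b\<^sub>j\<close>: the three arcs form a theta graph. By the
  Jordan curve theorem one arc runs inside the curve formed by the other two and splits its
  inside into two regions. Wherever \<open>a\<^sub>3\<close> lies, some \<open>b\<^sub>j\<close> is separated from it by one of the
  resulting Jordan curves, which the edge \<open>a\<^sub>3 b\<^sub>j\<close> cannot cross.\<close>

section \<open>The ideals \<open>xR + I\<close> and unit orbits\<close>

lemma ideal_0: "is_ideal I \<Longrightarrow> 0 \<in> I"
  unfolding is_ideal_def by blast

lemma ideal_add: "is_ideal I \<Longrightarrow> x \<in> I \<Longrightarrow> y \<in> I \<Longrightarrow> x + y \<in> I"
  unfolding is_ideal_def by blast

lemma ideal_mult: "is_ideal I \<Longrightarrow> x \<in> I \<Longrightarrow> r * x \<in> I"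
  unfolding is_ideal_def by blast

lemma ideal_diff: "is_ideal I \<Longrightarrow> x \<in> I \<Longrightarrow> y \<in> I \<Longrightarrow> x - y \<in> I"
  using ideal_add[of I x "(- 1) * y"] ideal_mult[of I y "- 1"] by simp

lemma local_ring_with_proper_ideal:
  assumes "local_ring_with M"
  shows "is_ideal M" "1 \<notin> M"
proof -
  have "is_ideal M" "M \<noteq> UNIV"
    using assms unfolding local_ring_with_def is_maximal_ideal_def by blast+
  then show "is_ideal M" "1 \<notin> M"
    using ideal_mult[of M 1] by auto
qed

lemma units_inverse:
  assumes "u \<in> units"
  obtains v where "v * u = 1"
proof -
  obtain k where "1 = u * k"
    using assms unfolding units_def dvd_def by blast
  then show ?thesis
    using that[of k] by (simp add: mult.commute)
qed

lemma principal_plus_memI: "i \<in> I \<Longrightarrow> z = x * r + i \<Longrightarrow> z \<in> principal_plus I x"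
  unfolding principal_plus_def by blast

lemma ideal_subset_principal_plus: "I \<subseteq> principal_plus I x"
  using principal_plus_memI[of _ I _ x 0] by auto

lemma mult_mem_principal_plus:
  assumes "is_ideal I" "c \<in> principal_plus I x"
  shows "w * c \<in> principal_plus I x"
proof -
  obtain r i where "i \<in> I" "c = x * r + i"
    using assms(2) unfolding principal_plus_def by blast
  then show ?thesis
    using ideal_mult[OF assms(1)] by (intro principal_plus_memI[of "w * i" _ _ _ "w * r"])
      (auto simp: algebra_simps)
qed

lemma self_mem_principal_plus: "is_ideal I \<Longrightarrow> x \<in> principal_plus I x"
  using principal_plus_memI[of 0 I x x 1] ideal_0 by auto

lemma principal_plus_subset:
  assumes "is_ideal J" "I \<subseteq> J" "x \<in> J"
  shows "principal_plus I x \<subseteq> J"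
proof
  fix z assume "z \<in> principal_plus I x"
  then obtain r i where "i \<in> I" "z = r * x + i"
    unfolding principal_plus_def by (auto simp: mult.commute)
  then show "z \<in> J"
    using assms ideal_add ideal_mult by blast
qed

lemma principal_plus_mono:
  assumes "is_ideal I" "x \<in> principal_plus I y"
  shows "principal_plus I x \<subseteq> principal_plus I y"
proof
  obtain s j where j: "j \<in> I" "x = y * s + j"
    using assms(2) unfolding principal_plus_def by blast
  fix z assume "z \<in> principal_plus I x"
  then obtain r i where "i \<in> I" "z = x * r + i"
    unfolding principal_plus_def by blast
  then show "z \<in> principal_plus I y"
    using j ideal_add[OF assms(1)] ideal_mult[OF assms(1)]
    by (intro principal_plus_memI[of "r * j + i" _ _ _ "s * r"]) (auto simp: algebra_simps)
qed

lemma unit_orbit_not_mem_principal_plus: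
  assumes "is_ideal I" "x \<notin> principal_plus I y" "a \<in> unit_orbit x" "b \<in> unit_orbit y"
  shows "a \<notin> principal_plus I b"
proof
  obtain u w where u: "u \<in> units" "a = u * x" and w: "b = w * y"
    using assms(3,4) unfolding unit_orbit_def by blast
  obtain v where v: "v * u = 1"
    using units_inverse[OF u(1)] .
  assume "a \<in> principal_plus I b"
  moreover have "principal_plus I b \<subseteq> principal_plus I y"
    using principal_plus_mono[OF assms(1)] mult_mem_principal_plus[OF assms(1)
        self_mem_principal_plus[OF assms(1)]] w by blast
  ultimately have "v * a \<in> principal_plus I y"
    using mult_mem_principal_plus[OF assms(1)] by blast
  then show False
    using assms(2) u(2) v by (simp add: mult.assoc[symmetric])
qed

lemma gamma_adj_unit_orbits:
  assumes "is_ideal I" "is_ideal M" "1 \<notin> M" "I \<subseteq> M" "x \<in> M" "y \<in> M"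
    and "x \<notin> principal_plus I y" "y \<notin> principal_plus I x"
    and "a \<in> unit_orbit x" "b \<in> unit_orbit y"
  shows "gamma_adj I a b"
proof -
  have a_b: "a \<notin> principal_plus I b" and b_a: "b \<notin> principal_plus I a"
    using unit_orbit_not_mem_principal_plus assms(1,7-10) by blast+
  have "principal_plus I c \<noteq> UNIV" if "c \<in> {a, b}" for c
  proof -
    have "c \<in> M"
      using that assms(5,6,9,10) ideal_mult[OF assms(2)] unfolding unit_orbit_def by auto
    then show ?thesis
      using principal_plus_subset[OF assms(2,4)] assms(3) by blast
  qed
  moreover have "a \<notin> I" "b \<notin> I"
    using a_b b_a ideal_subset_principal_plus by blast+
  moreover have "a \<noteq> b"
    using a_b self_mem_principal_plus[OF assms(1)] by blast
  ultimately show ?thesis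
    unfolding gamma_adj_def gamma_vertices_def using a_b b_a by blast
qed

section \<open>Minimal generating sets of \<open>M/I\<close>\<close>

lemma self_mem_coset: "is_ideal I \<Longrightarrow> x \<in> coset I x"
  unfolding coset_def using ideal_0 by force

lemma quot_gen_mono:
  assumes "is_ideal I" "finite S" "S \<subseteq> range (coset I)" "T \<subseteq> S"
  shows "quot_gen I T \<subseteq> quot_gen I S"
proof
  fix z assume "z \<in> quot_gen I T"
  then obtain r rep where rep: "\<forall>C\<in>T. rep C \<in> C" and z: "z - (\<Sum>C\<in>T. r C * rep C) \<in> I"
    unfolding quot_gen_def by blast
  define r' where "r' C = (if C \<in> T then r C else 0)" for C
  define rep' where "rep' C = (if C \<in> T then rep C else SOME e. e \<in> C)" for C
  have "rep' C \<in> C" if C: "C \<in> S" for C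
  proof -
    obtain c where "C = coset I c"
      using C assms(3) by blast
    then have "\<exists>e. e \<in> C"
      using self_mem_coset[OF assms(1)] by blast
    then show ?thesis
      using rep unfolding rep'_def by (auto intro: someI_ex)
  qed
  moreover have "(\<Sum>C\<in>S. r' C * rep' C) = (\<Sum>C\<in>T. r C * rep C)"
  proof -
    have "(\<Sum>C\<in>S. r' C * rep' C) = (\<Sum>C\<in>T. r' C * rep' C)"
      by (rule sum.mono_neutral_right) (use assms in \<open>auto simp: r'_def\<close>)
    also have "\<dots> = (\<Sum>C\<in>T. r C * rep C)"
      by (rule sum.cong) (auto simp: r'_def rep'_def)
    finally show ?thesis .
  qed
  ultimately show "z \<in> quot_gen I S"
    unfolding quot_gen_def using z by (intro CollectI exI[of _ r'] exI[of _ rep'] conjI) auto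
qed

lemma mem_quot_gen:
  assumes "is_ideal I" "finite S" "S \<subseteq> range (coset I)" "coset I x \<in> S"
  shows "x \<in> quot_gen I S"
proof -
  have "x \<in> quot_gen I {coset I x}"
    unfolding quot_gen_def using self_mem_coset[OF assms(1)] ideal_0[OF assms(1)]
    by (intro CollectI exI[of _ "\<lambda>_. 1"] exI[of _ "\<lambda>_. x"] conjI) simp_all
  then show ?thesis
    using quot_gen_mono[OF assms(1-3)] assms(4) by blast
qed

lemma quot_gen_remove_redundant:
  assumes "is_ideal I" "finite S" "S \<subseteq> range (coset I)" "C0 \<in> S"
    and redundant: "\<And>rep. \<forall>C\<in>S. rep C \<in> C \<Longrightarrow> \<exists>s. rep C0 - (\<Sum>C\<in>S - {C0}. s C * rep C) \<in> I"
  shows "quot_gen I (S - {C0}) = quot_gen I S"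
proof
  show "quot_gen I (S - {C0}) \<subseteq> quot_gen I S"
    using quot_gen_mono assms(1-3) by blast
  show "quot_gen I S \<subseteq> quot_gen I (S - {C0})"
  proof
    fix z assume "z \<in> quot_gen I S"
    then obtain r rep where rep: "\<forall>C\<in>S. rep C \<in> C" and z: "z - (\<Sum>C\<in>S. r C * rep C) \<in> I"
      unfolding quot_gen_def by blast
    obtain s where s: "rep C0 - (\<Sum>C\<in>S - {C0}. s C * rep C) \<in> I"
      using redundant[OF rep] by blast
    have "(\<Sum>C\<in>S. r C * rep C) = r C0 * rep C0 + (\<Sum>C\<in>S - {C0}. r C * rep C)"
      using assms(2,4) by (simp add: sum.remove)
    then have "z - (\<Sum>C\<in>S - {C0}. (r C + r C0 * s C) * rep C)
        = (z - (\<Sum>C\<in>S. r C * rep C)) + r C0 * (rep C0 - (\<Sum>C\<in>S - {C0}. s C * rep C))"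
      by (simp add: sum.distrib sum_distrib_left algebra_simps)
    also have "\<dots> \<in> I"
      by (intro ideal_add[OF assms(1)] ideal_mult[OF assms(1)] z s)
    finally show "z \<in> quot_gen I (S - {C0})"
      unfolding quot_gen_def using rep
      by (intro CollectI exI[of _ "\<lambda>C. r C + r C0 * s C"] exI[of _ rep] conjI) auto
  qed
qed

lemma min_gen_set_not_mem_principal_plus:
  assumes "is_ideal I" "finite S" "min_gen_set I M S"
    and "coset I x \<in> S" "coset I y \<in> S" "coset I x \<noteq> coset I y"
  shows "x \<notin> principal_plus I y"
proof
  assume "x \<in> principal_plus I y"
  then obtain r i where i: "i \<in> I" and x: "x = y * r + i"
    unfolding principal_plus_def by blast
  have S: "S \<subseteq> range (coset I)" "quot_gen I S = M" "\<forall>T. T \<subset> S \<longrightarrow> quot_gen I T \<noteq> M"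
    using assms(3) unfolding min_gen_set_def by blast+
  have "quot_gen I (S - {coset I x}) = quot_gen I S"
  proof (rule quot_gen_remove_redundant[OF assms(1,2) S(1) assms(4)])
    fix rep assume rep: "\<forall>C\<in>S. rep C \<in> C"
    have "rep (coset I x) \<in> coset I x" "rep (coset I y) \<in> coset I y"
      using rep assms(4,5) by blast+
    then obtain i' j where "i' \<in> I" "rep (coset I x) = x + i'" "j \<in> I" "rep (coset I y) = y + j"
      unfolding coset_def by blast
    then have "rep (coset I x) - r * rep (coset I y) = (i + i') - r * j"
      using x by (simp add: algebra_simps)
    also have "\<dots> \<in> I"
      by (intro ideal_diff[OF assms(1)] ideal_add[OF assms(1)] ideal_mult[OF assms(1)] i
          \<open>i' \<in> I\<close> \<open>j \<in> I\<close>)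
    finally have "rep (coset I x) - r * rep (coset I y) \<in> I" .
    moreover have "(\<Sum>C\<in>S - {coset I x}. (if C = coset I y then r else 0) * rep C)
        = (\<Sum>C\<in>S - {coset I x}. if C = coset I y then r * rep C else 0)"
      by (rule sum.cong) auto
    moreover have "\<dots> = r * rep (coset I y)"
      using assms(2,5,6) by simp
    ultimately show "\<exists>s. rep (coset I x) - (\<Sum>C\<in>S - {coset I x}. s C * rep C) \<in> I"
      by (intro exI[of _ "\<lambda>C. if C = coset I y then r else 0"]) argo
  qed
  moreover have "S - {coset I x} \<subset> S"
    using assms(4) by blast
  ultimately show False
    using S by auto
qed

section \<open>Non-planarity of \<open>K\<^sub>3\<^sub>,\<^sub>3\<close>\<close>

definition theta :: "complex \<Rightarrow> complex \<Rightarrow> (real \<Rightarrow> complex) \<Rightarrow> (real \<Rightarrow> complex) \<Rightarrow>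
    (real \<Rightarrow> complex) \<Rightarrow> bool" where
  "theta a b c1 c2 c3 \<longleftrightarrow> a \<noteq> b \<and>
     (\<forall>c \<in> {c1, c2, c3}. arc c \<and> pathstart c = a \<and> pathfinish c = b) \<and>
     path_image c1 \<inter> path_image c2 = {a, b} \<and> path_image c1 \<inter> path_image c3 = {a, b} \<and>
     path_image c2 \<inter> path_image c3 = {a, b}"

lemma theta_swap: "theta a b c1 c2 c3 \<Longrightarrow> theta a b c2 c1 c3"
  unfolding theta_def by blast

lemma theta_rotate: "theta a b c1 c2 c3 \<Longrightarrow> theta a b c2 c3 c1"
  unfolding theta_def by blast

lemma theta_Jordan:
  assumes "theta a b c1 c2 c3"
  defines "K \<equiv> path_image c1 \<union> path_image c2"
  shows "inside K \<noteq> {}" "open (inside K)" "connected (inside K)"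
    "open (outside K)" "connected (outside K)" "bounded (inside K)" "frontier (inside K) = K"
proof -
  let ?c = "c1 +++ reversepath c2"
  have "simple_path ?c" "pathfinish ?c = pathstart ?c" "path_image ?c = K"
    using assms by (auto simp: theta_def simple_path_join_loop_eq arc_reversepath path_image_join)
  with Jordan_inside_outside[of ?c]
  show "inside K \<noteq> {}" "open (inside K)" "connected (inside K)"
    "open (outside K)" "connected (outside K)" "bounded (inside K)" "frontier (inside K) = K"
    by auto
qed

lemma theta_interior_point:
  assumes "theta a b c1 c2 c3"
  obtains z where "z \<in> path_image c1 - {a, b}"
  using assms nonempty_simple_path_endless[of c1] by (auto simp: theta_def arc_imp_simple_path)

definition joins_avoiding :: "'a::topological_space set \<Rightarrow> 'a \<Rightarrow> 'a \<Rightarrow> bool" where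
  "joins_avoiding K q b \<longleftrightarrow>
     (\<exists>g. path g \<and> pathstart g = q \<and> pathfinish g = b \<and> path_image g \<inter> K \<subseteq> {b})"

lemma joins_avoiding_mono: "joins_avoiding K q b \<Longrightarrow> K' \<subseteq> K \<Longrightarrow> joins_avoiding K' q b"
  unfolding joins_avoiding_def by blast

lemma joins_avoiding_start: "joins_avoiding K q b \<Longrightarrow> q \<in> K \<Longrightarrow> q = b"
  unfolding joins_avoiding_def by (metis IntI pathstart_in_path_image singletonD subsetD)

lemma joins_avoiding_same_side:
  assumes "joins_avoiding K q b" "open A" "open B" "A \<inter> B = {}" "- K \<subseteq> A \<union> B" "q \<in> A"
  shows "b \<in> K \<union> A"
proof (rule ccontr)
  obtain g where g: "path g" "pathstart g = q" "pathfinish g = b" "path_image g \<inter> K \<subseteq> {b}"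
    using assms(1) unfolding joins_avoiding_def by blast
  assume "b \<notin> K \<union> A"
  then have "b \<in> B" "path_image g \<subseteq> A \<union> B"
    using assms(5) g(4) by auto
  moreover have "q \<in> path_image g" "b \<in> path_image g"
    using g(2,3) pathstart_in_path_image[of g] pathfinish_in_path_image[of g] by auto
  ultimately show False
    using connectedD[OF connected_path_image[OF g(1)] assms(2-3)] assms(4,6) by blast
qed

lemma joins_avoiding_inside:
  fixes K :: "'a::real_normed_vector set"
  assumes "closed K" "joins_avoiding K q b" "q \<in> inside K"
  shows "b \<in> K \<union> inside K"
  using joins_avoiding_same_side[of K q b "inside K" "outside K"] assms
  by (simp add: open_inside open_outside)

lemma joins_avoiding_outside:
  fixes K :: "'a::real_normed_vector set"
  assumes "closed K" "joins_avoiding K q b" "q \<in> outside K"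
  shows "b \<in> K \<union> outside K"
  using joins_avoiding_same_side[of K q b "outside K" "inside K"] assms
  by (simp add: open_inside open_outside Int_commute Un_commute)

lemma theta_insides_disjoint:
  assumes theta: "theta a b c1 c2 c3"
    and h2: "path_image c2 \<inter> inside (path_image c1 \<union> path_image c3) = {}"
    and h3: "path_image c3 \<inter> inside (path_image c1 \<union> path_image c2) = {}"
  shows "inside (path_image c1 \<union> path_image c2) \<inter> inside (path_image c1 \<union> path_image c3) = {}"
proof (rule ccontr)
  let ?T1 = "path_image c1"  let ?T2 = "path_image c2"  let ?T3 = "path_image c3"
  assume meet: "inside (?T1 \<union> ?T2) \<inter> inside (?T1 \<union> ?T3) \<noteq> {}"
  note J12 = theta_Jordan[OF theta] and J13 = theta_Jordan[OF theta_rotate[OF theta_swap[OF theta]]]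
  have sub: "inside (?T1 \<union> ?T2) \<subseteq> inside (?T1 \<union> ?T3) \<union> outside (?T1 \<union> ?T3)"
  proof
    fix x assume "x \<in> inside (?T1 \<union> ?T2)"
    then have "x \<notin> ?T1" "x \<notin> ?T3"
      using h3 inside_no_overlap[of "?T1 \<union> ?T2"] by blast+
    then show "x \<in> inside (?T1 \<union> ?T3) \<union> outside (?T1 \<union> ?T3)"
      by simp
  qed
  have "inside (?T1 \<union> ?T3) \<inter> inside (?T1 \<union> ?T2) = {} \<or>
        outside (?T1 \<union> ?T3) \<inter> inside (?T1 \<union> ?T2) = {}"
    by (rule connectedD[OF J12(3) J13(2,4) _ sub]) auto
  with meet sub have "inside (?T1 \<union> ?T2) \<subseteq> inside (?T1 \<union> ?T3)"
    by blast
  then have "closure (inside (?T1 \<union> ?T2)) \<subseteq> closure (inside (?T1 \<union> ?T3))"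
    by (rule closure_mono)
  then have T2_sub: "?T2 \<subseteq> inside (?T1 \<union> ?T3) \<union> ?T1 \<union> ?T3"
    using J12(7) J13(7) closure_Un_frontier by (metis Un_subset_iff sup_assoc)
  obtain z where z: "z \<in> ?T2 - {a, b}"
    using theta_interior_point[OF theta_swap[OF theta]] .
  then have "z \<notin> ?T1 \<union> ?T3"
    using theta by (auto simp: theta_def)
  then show False
    using T2_sub z h2 by blast
qed

text \<open>The two closed regions meet exactly in c1, so Janiszewski's theorem applies.\<close>
lemma theta_outer_region_connected:
  assumes theta: "theta a b c1 c2 c3"
    and h2: "path_image c2 \<inter> inside (path_image c1 \<union> path_image c3) = {}"
    and h3: "path_image c3 \<inter> inside (path_image c1 \<union> path_image c2) = {}"
  shows "connected (- (path_image c1 \<union> path_image c2 \<union> inside (path_image c1 \<union> path_image c2)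
           \<union> (path_image c1 \<union> path_image c3 \<union> inside (path_image c1 \<union> path_image c3))))"
proof -
  let ?T1 = "path_image c1"  let ?T2 = "path_image c2"  let ?T3 = "path_image c3"
  define S where "S = ?T1 \<union> ?T2 \<union> inside (?T1 \<union> ?T2)"
  define T where "T = ?T1 \<union> ?T3 \<union> inside (?T1 \<union> ?T3)"
  note J12 = theta_Jordan[OF theta] and J13 = theta_Jordan[OF theta_rotate[OF theta_swap[OF theta]]]
  have S_closure: "S = closure (inside (?T1 \<union> ?T2))"
    unfolding S_def closure_Un_frontier J12(7) by blast
  have T_closure: "T = closure (inside (?T1 \<union> ?T3))"
    unfolding T_def closure_Un_frontier J13(7) by blast
  have "S \<inter> T = ?T1"
    using theta_insides_disjoint[OF theta h2 h3] h2 h3 theta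
    unfolding S_def T_def theta_def by auto
  then have "connected (S \<inter> T)"
    using theta by (simp add: theta_def arc_imp_path connected_path_image)
  moreover have "compact S" "closed T"
    unfolding S_closure T_closure using J12(6) by simp_all
  moreover have "connected (- S)" "connected (- T)"
    unfolding S_def T_def using J12(5) J13(5) by (simp_all add: outside_inside Un_commute)
  ultimately show ?thesis
    using Janiszewski_connected unfolding S_def T_def by blast
qed

text \<open>Otherwise the inside of c2, c3 would lie in the connected unbounded set left over by the
  other two closed regions, yet be separated from its unbounded part by c2, c3.\<close>
lemma theta_arc_inside:
  assumes theta: "theta a b c1 c2 c3"
  shows "path_image c3 \<inter> inside (path_image c1 \<union> path_image c2) \<noteq> {} \<or>
         path_image c1 \<inter> inside (path_image c2 \<union> path_image c3) \<noteq> {} \<or>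
         path_image c2 \<inter> inside (path_image c1 \<union> path_image c3) \<noteq> {}"
proof (rule ccontr)
  let ?T1 = "path_image c1"  let ?T2 = "path_image c2"  let ?T3 = "path_image c3"
  assume "\<not> ?thesis"
  then have h3: "?T3 \<inter> inside (?T1 \<union> ?T2) = {}" and h1: "?T1 \<inter> inside (?T2 \<union> ?T3) = {}"
    and h2: "?T2 \<inter> inside (?T1 \<union> ?T3) = {}"
    by auto
  have theta213: "theta a b c2 c1 c3" and theta312: "theta a b c3 c1 c2"
    using theta_swap[OF theta] theta_rotate[OF theta_rotate[OF theta]] .
  have D2: "inside (?T1 \<union> ?T2) \<inter> inside (?T2 \<union> ?T3) = {}"
    using theta_insides_disjoint[OF theta213] h1 h3 by (simp add: Un_commute)
  have D3: "inside (?T1 \<union> ?T3) \<inter> inside (?T2 \<union> ?T3) = {}"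
    using theta_insides_disjoint[OF theta312] h1 h2 by (simp add: Un_commute)
  define R where "R = - (?T1 \<union> ?T2 \<union> inside (?T1 \<union> ?T2) \<union> (?T1 \<union> ?T3 \<union> inside (?T1 \<union> ?T3)))"
  have R: "connected R"
    unfolding R_def by (rule theta_outer_region_connected[OF theta h2 h3])
  note J23 = theta_Jordan[OF theta_rotate[OF theta]]
  have inside_R: "inside (?T2 \<union> ?T3) \<subseteq> R"
    using D2 D3 h1 inside_no_overlap[of "?T2 \<union> ?T3"] unfolding R_def by blast
  have "bounded (?T1 \<union> ?T2 \<union> ?T3)"
    using theta by (auto simp: theta_def bounded_path_image arc_imp_path)
  then have "bounded (?T1 \<union> ?T2 \<union> ?T3 \<union> inside (?T1 \<union> ?T2) \<union> inside (?T1 \<union> ?T3) \<union> inside (?T2 \<union> ?T3))"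
    using theta_Jordan(6)[OF theta] theta_Jordan(6)[OF theta_rotate[OF theta_swap[OF theta]]] J23(6)
    by simp
  then obtain z where z: "z \<notin> ?T1 \<union> ?T2 \<union> ?T3 \<union> inside (?T1 \<union> ?T2) \<union> inside (?T1 \<union> ?T3) \<union> inside (?T2 \<union> ?T3)"
    using not_bounded_UNIV[where 'a=complex] by (metis bounded_subset subsetI)
  then have z_R: "z \<in> R" and z_outside: "z \<in> outside (?T2 \<union> ?T3)"
    unfolding R_def outside_inside by blast+
  have "R \<subseteq> - (?T2 \<union> ?T3)"
    unfolding R_def by blast
  then have "inside (?T2 \<union> ?T3) \<inter> R = {} \<or> outside (?T2 \<union> ?T3) \<inter> R = {}"
    by (intro connectedD[OF R J23(2,4)]) auto
  then show False
    using inside_R J23(1) z_R z_outside by blast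
qed

lemma theta_inner_arc_no_tripod:
  assumes theta: "theta a b c1 c2 c3"
    and inner: "path_image c3 \<inter> inside (path_image c1 \<union> path_image c2) \<noteq> {}"
    and b1: "b1 \<in> path_image c1 - {a, b}" and b2: "b2 \<in> path_image c2 - {a, b}"
    and b3: "b3 \<in> path_image c3 - {a, b}"
    and q: "q \<notin> path_image c1 \<union> path_image c2 \<union> path_image c3"
    and j1: "joins_avoiding (path_image c1 \<union> path_image c2 \<union> path_image c3) q b1"
    and j2: "joins_avoiding (path_image c1 \<union> path_image c2 \<union> path_image c3) q b2"
    and j3: "joins_avoiding (path_image c1 \<union> path_image c2 \<union> path_image c3) q b3"
  shows False
proof -
  let ?T1 = "path_image c1"  let ?T2 = "path_image c2"  let ?T3 = "path_image c3"
  have c: "arc c1" "arc c2" "arc c3" "pathstart c1 = a" "pathfinish c1 = b"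
    "pathstart c2 = a" "pathfinish c2 = b" "pathstart c3 = a" "pathfinish c3 = b" "a \<noteq> b"
    "?T1 \<inter> ?T2 = {a, b}" "?T1 \<inter> ?T3 = {a, b}" "?T2 \<inter> ?T3 = {a, b}"
    using theta by (auto simp: theta_def)
  obtain split: "inside (?T1 \<union> ?T3) \<union> inside (?T2 \<union> ?T3) \<union> (?T3 - {a, b}) = inside (?T1 \<union> ?T2)"
    using split_inside_simple_closed_curve[OF arc_imp_simple_path[OF c(1)] c(4,5)
        arc_imp_simple_path[OF c(2)] c(6,7) arc_imp_simple_path[OF c(3)] c(8-13) inner] .
  have closed: "closed (?T1 \<union> ?T2)" "closed (?T1 \<union> ?T3)" "closed (?T2 \<union> ?T3)"
    using c(1-3) by (simp_all add: arc_imp_path closed_path_image closed_Un)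
  have j: "joins_avoiding (?T2 \<union> ?T3) q b1" "joins_avoiding (?T1 \<union> ?T3) q b2"
    "joins_avoiding (?T1 \<union> ?T2) q b3"
    by (rule joins_avoiding_mono[OF j1] joins_avoiding_mono[OF j2] joins_avoiding_mono[OF j3]; blast)+
  have b_notin: "b1 \<notin> ?T2 \<union> ?T3" "b2 \<notin> ?T1 \<union> ?T3" "b3 \<notin> ?T1 \<union> ?T2"
    using b1 b2 b3 c(11-13) by blast+
  have b3_inside: "b3 \<in> inside (?T1 \<union> ?T2)"
    using split b3 by blast
  show False
  proof (cases "q \<in> outside (?T1 \<union> ?T2)")
    case True
    then have "b3 \<in> ?T1 \<union> ?T2 \<union> outside (?T1 \<union> ?T2)"
      using joins_avoiding_outside[OF closed(1) j(3)] by blast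
    then show False
      using b3_inside b_notin(3) inside_Int_outside by blast
  next
    case False
    with q have "q \<in> inside (?T1 \<union> ?T2)"
      using inside_Un_outside by blast
    with split q have "q \<in> inside (?T1 \<union> ?T3) \<or> q \<in> inside (?T2 \<union> ?T3)"
      by blast
    then show False
    proof
      assume "q \<in> inside (?T1 \<union> ?T3)"
      then have "b2 \<in> ?T1 \<union> ?T3 \<union> inside (?T1 \<union> ?T3)"
        using joins_avoiding_inside[OF closed(2) j(2)] by blast
      then have "b2 \<in> inside (?T1 \<union> ?T2)"
        using split b_notin(2) by blast
      then show False
        using b2 inside_no_overlap by blast
    next
      assume "q \<in> inside (?T2 \<union> ?T3)"
      then have "b1 \<in> ?T2 \<union> ?T3 \<union> inside (?T2 \<union> ?T3)"
        using joins_avoiding_inside[OF closed(3) j(1)] by blast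
      then have "b1 \<in> inside (?T1 \<union> ?T2)"
        using split b_notin(1) by blast
      then show False
        using b1 inside_no_overlap by blast
    qed
  qed
qed

lemma theta_no_tripod:
  assumes theta: "theta a b c1 c2 c3"
    and b1: "b1 \<in> path_image c1 - {a, b}" and b2: "b2 \<in> path_image c2 - {a, b}"
    and b3: "b3 \<in> path_image c3 - {a, b}"
    and j1: "joins_avoiding (path_image c1 \<union> path_image c2 \<union> path_image c3) q b1"
    and j2: "joins_avoiding (path_image c1 \<union> path_image c2 \<union> path_image c3) q b2"
    and j3: "joins_avoiding (path_image c1 \<union> path_image c2 \<union> path_image c3) q b3"
  shows False
proof -
  let ?T1 = "path_image c1"  let ?T2 = "path_image c2"  let ?T3 = "path_image c3"
  have q: "q \<notin> ?T1 \<union> ?T2 \<union> ?T3"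
  proof
    assume "q \<in> ?T1 \<union> ?T2 \<union> ?T3"
    then have "b1 = b2"
      using joins_avoiding_start j1 j2 by metis
    then show False
      using b1 b2 theta by (auto simp: theta_def)
  qed
  from theta_arc_inside[OF theta] show False
  proof (elim disjE)
    assume "?T3 \<inter> inside (?T1 \<union> ?T2) \<noteq> {}"
    then show False
      by (rule theta_inner_arc_no_tripod[OF theta _ b1 b2 b3 q j1 j2 j3])
  next
    assume "?T1 \<inter> inside (?T2 \<union> ?T3) \<noteq> {}"
    then show False
      using theta_inner_arc_no_tripod[OF theta_rotate[OF theta] _ b2 b3 b1, of q] q j1 j2 j3
      by (simp add: Un_ac)
  next
    assume "?T2 \<inter> inside (?T1 \<union> ?T3) \<noteq> {}"
    then show False
      using theta_inner_arc_no_tripod[OF theta_rotate[OF theta_swap[OF theta]] _ b1 b3 b2, of q]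
        q j1 j2 j3
      by (simp add: Un_ac)
  qed
qed

locale K33_drawing =
  fixes A B :: "'v set" and p :: "'v \<Rightarrow> complex" and \<gamma> :: "'v \<Rightarrow> 'v \<Rightarrow> real \<Rightarrow> complex"
  assumes card_A: "card A = 3" and card_B: "card B = 3" and disjoint: "A \<inter> B = {}"
    and inj: "inj_on p (A \<union> B)"
    and edge: "\<And>a b. a \<in> A \<Longrightarrow> b \<in> B \<Longrightarrow>
      arc (\<gamma> a b) \<and> pathstart (\<gamma> a b) = p a \<and> pathfinish (\<gamma> a b) = p b"
    and edges_meet: "\<And>a b a' b'. a \<in> A \<Longrightarrow> b \<in> B \<Longrightarrow> a' \<in> A \<Longrightarrow> b' \<in> B \<Longrightarrow> (a, b) \<noteq> (a', b') \<Longrightarrow>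
      path_image (\<gamma> a b) \<inter> path_image (\<gamma> a' b') \<subseteq> p ` ({a} \<inter> {a'} \<union> {b} \<inter> {b'})"
begin

definition detour :: "'v \<Rightarrow> 'v \<Rightarrow> 'v \<Rightarrow> real \<Rightarrow> complex" where
  "detour a a' b = \<gamma> a b +++ reversepath (\<gamma> a' b)"

lemma detour:
  assumes "a \<in> A" "a' \<in> A" "a \<noteq> a'" "b \<in> B"
  shows "arc (detour a a' b)" "pathstart (detour a a' b) = p a" "pathfinish (detour a a' b) = p a'"
    "path_image (detour a a' b) = path_image (\<gamma> a b) \<union> path_image (\<gamma> a' b)"
proof -
  have "path_image (\<gamma> a b) \<inter> path_image (\<gamma> a' b) \<subseteq> {p b}"
    using edges_meet[of a b a' b] assms by auto
  then show "arc (detour a a' b)"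
    unfolding detour_def using edge[of a b] edge[of a' b] assms
    by (subst arc_join_eq) (auto simp: arc_reversepath)
  show "pathstart (detour a a' b) = p a" "pathfinish (detour a a' b) = p a'"
    "path_image (detour a a' b) = path_image (\<gamma> a b) \<union> path_image (\<gamma> a' b)"
    unfolding detour_def using edge[of a b] edge[of a' b] assms by (simp_all add: path_image_join)
qed

lemma detours_meet:
  assumes "a \<in> A" "a' \<in> A" "a \<noteq> a'" "b \<in> B" "b' \<in> B" "b \<noteq> b'"
  shows "path_image (detour a a' b) \<inter> path_image (detour a a' b') = {p a, p a'}"
proof
  show "{p a, p a'} \<subseteq> path_image (detour a a' b) \<inter> path_image (detour a a' b')"
    using pathstart_in_path_image[of "detour a a' b"] pathfinish_in_path_image[of "detour a a' b"]
      pathstart_in_path_image[of "detour a a' b'"] pathfinish_in_path_image[of "detour a a' b'"]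
      detour(2,3)[of a a' b] detour(2,3)[of a a' b'] assms by auto
  show "path_image (detour a a' b) \<inter> path_image (detour a a' b') \<subseteq> {p a, p a'}"
    unfolding detour(4)[OF assms(1-4)] detour(4)[OF assms(1-3,5)]
    using edges_meet[of _ b _ b'] assms by fastforce
qed

lemma detour_interior:
  assumes "a \<in> A" "a' \<in> A" "a \<noteq> a'" "b \<in> B"
  shows "p b \<in> path_image (detour a a' b) - {p a, p a'}"
proof -
  have "p b \<in> path_image (\<gamma> a b)"
    using edge[of a b] pathfinish_in_path_image[of "\<gamma> a b"] assms by simp
  moreover have "p b \<noteq> p a" "p b \<noteq> p a'"
    using inj_on_eq_iff[OF inj] disjoint assms by blast+
  ultimately show ?thesis
    using detour(4)[OF assms] by blast
qed

lemma edge_meets_detour: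
  assumes "a \<in> A" "a' \<in> A" "a'' \<in> A" "a'' \<noteq> a" "a'' \<noteq> a'" "a \<noteq> a'" "b \<in> B" "b' \<in> B"
  shows "path_image (\<gamma> a'' b) \<inter> path_image (detour a a' b') \<subseteq> {p b}"
  using edges_meet[of a'' b a b'] edges_meet[of a'' b a' b'] detour(4)[of a a' b'] assms by auto

theorem impossible: False
proof -
  obtain a1 a2 a3 where A: "A = {a1, a2, a3}" "a1 \<noteq> a2" "a1 \<noteq> a3" "a2 \<noteq> a3"
    using card_A card_3_iff by metis
  obtain b1 b2 b3 where B: "B = {b1, b2, b3}" "b1 \<noteq> b2" "b1 \<noteq> b3" "b2 \<noteq> b3"
    using card_B card_3_iff by metis
  have a: "a1 \<in> A" "a2 \<in> A" "a3 \<in> A" and b: "b1 \<in> B" "b2 \<in> B" "b3 \<in> B"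
    using A B by auto
  let ?P = "detour a1 a2"
  have "theta (p a1) (p a2) (?P b1) (?P b2) (?P b3)"
    unfolding theta_def using detour detours_meet inj_on_eq_iff[OF inj] a b A(2) B(2-4) by auto
  moreover have "joins_avoiding (path_image (?P b1) \<union> path_image (?P b2) \<union> path_image (?P b3)) (p a3) (p b)"
    if "b \<in> B" for b
    unfolding joins_avoiding_def
    using edge[OF a(3) that] arc_imp_path edge_meets_detour[OF a(1-3) _ _ A(2) that] A(3,4) b
    by blast
  ultimately show False
    using theta_no_tripod detour_interior[OF a(1,2) A(2)] b by metis
qed

end

lemma K33_subgraph_not_planar:
  assumes "A \<subseteq> V" "B \<subseteq> V" "A \<inter> B = {}" "card A = 3" "card B = 3"
    and edges: "\<And>a b. a \<in> A \<Longrightarrow> b \<in> B \<Longrightarrow> E a b"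
  shows "\<not> planar V E"
proof
  assume "planar V E"
  obtain p :: "'a \<Rightarrow> complex" and \<gamma> where inj: "inj_on p V"
    and edge: "\<forall>u\<in>V. \<forall>v\<in>V. E u v \<longrightarrow>
        arc (\<gamma> u v) \<and> pathstart (\<gamma> u v) = p u \<and> pathfinish (\<gamma> u v) = p v \<and>
        path_image (\<gamma> u v) \<inter> p ` V \<subseteq> {p u, p v}"
    and cross: "\<forall>u\<in>V. \<forall>v\<in>V. \<forall>w\<in>V. \<forall>z\<in>V. E u v \<and> E w z \<and> {u, v} \<noteq> {w, z} \<longrightarrow>
        path_image (\<gamma> u v) \<inter> path_image (\<gamma> w z) \<subseteq> p ` ({u, v} \<inter> {w, z})"
    using \<open>planar V E\<close> unfolding planar_def by (elim exE conjE) (rule that)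
  interpret K33_drawing A B p \<gamma>
  proof
    show "inj_on p (A \<union> B)"
      using inj assms(1,2) by (simp add: inj_on_subset)
    show "arc (\<gamma> a b) \<and> pathstart (\<gamma> a b) = p a \<and> pathfinish (\<gamma> a b) = p b" if "a \<in> A" "b \<in> B" for a b
      using edge edges[OF that] that assms(1,2) by blast
    show "path_image (\<gamma> a b) \<inter> path_image (\<gamma> a' b') \<subseteq> p ` ({a} \<inter> {a'} \<union> {b} \<inter> {b'})"
      if "a \<in> A" "b \<in> B" "a' \<in> A" "b' \<in> B" "(a, b) \<noteq> (a', b')" for a b a' b'
    proof -
      have "{a, b} \<inter> {a', b'} = {a} \<inter> {a'} \<union> {b} \<inter> {b'}" "{a, b} \<noteq> {a', b'}"
        using that \<open>A \<inter> B = {}\<close> by (auto simp: doubleton_eq_iff)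
      then show ?thesis
        using cross edges[OF that(1,2)] edges[OF that(3,4)] that assms(1,2) by (metis subsetD)
    qed
  qed (use assms in auto)
  show False
    by (rule impossible)
qed

theorem proposition3p13:
  fixes M I :: "'a::{comm_ring_1, finite} set" and S :: "'a set set" and x y :: 'a
  assumes "local_ring_with M"
    and "is_ideal I" and "I \<subseteq> M"
    and "\<not> quot_principal I M"
    and "min_gen_set I M S"
    and "coset I x \<in> S" and "coset I y \<in> S" and "coset I x \<noteq> coset I y"
    and "card (unit_orbit x) \<ge> 3" and "card (unit_orbit y) \<ge> 3"
  shows "\<not> planar (gamma_vertices I) (gamma_adj I)"
proof -
  have M: "is_ideal M" "1 \<notin> M"
    using local_ring_with_proper_ideal[OF \<open>local_ring_with M\<close>] by blast+
  have "finite S"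
    by simp
  have S: "S \<subseteq> range (coset I)" "quot_gen I S = M"
    using \<open>min_gen_set I M S\<close> unfolding min_gen_set_def by blast+
  have "x \<in> M" "y \<in> M"
    using mem_quot_gen[OF \<open>is_ideal I\<close> \<open>finite S\<close> S(1)] assms(6,7) S(2) by blast+
  moreover have "x \<notin> principal_plus I y" "y \<notin> principal_plus I x"
    using min_gen_set_not_mem_principal_plus[OF \<open>is_ideal I\<close> \<open>finite S\<close> \<open>min_gen_set I M S\<close>]
      assms(6-8) by metis+
  ultimately have adj: "gamma_adj I a b" if "a \<in> unit_orbit x" "b \<in> unit_orbit y" for a b
    using gamma_adj_unit_orbits[OF \<open>is_ideal I\<close> M \<open>I \<subseteq> M\<close>] that by blast
  obtain A B where A: "A \<subseteq> unit_orbit x" "card A = 3" and B: "B \<subseteq> unit_orbit y" "card B = 3"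
    using obtain_subset_with_card_n assms(9,10) by metis
  then have "A \<noteq> {}" "B \<noteq> {}"
    by auto
  show ?thesis
  proof (rule K33_subgraph_not_planar[OF _ _ _ A(2) B(2)])
    show "A \<subseteq> gamma_vertices I" "B \<subseteq> gamma_vertices I"
      using adj A(1) B(1) \<open>A \<noteq> {}\<close> \<open>B \<noteq> {}\<close> unfolding gamma_adj_def by blast+
    show "A \<inter> B = {}" "\<And>a b. a \<in> A \<Longrightarrow> b \<in> B \<Longrightarrow> gamma_adj I a b"
      using adj A(1) B(1) unfolding gamma_adj_def by blast+
  qed
qed

end
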